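(* Let $v,w$ be positive integers, $\theta\in[0,1]$, and let $K_{v,w}$ be the complete bipartite graph with parts $V$, $W$, $|V|=v$, $|W|=w$. For $1\le i\le 4$ let $P^i_m(K_{v,w})$ be the probability that the robber remains free after $m$ moves of the tipsy cop and drunken robber game when the game starts in Position $i$ (whenever that position exists). Then for all $m\ge 0$, \begin{align*} P_m^1(K_{v,w})&=\left(\tfrac{v-1}{v}\right)^{\lfloor\frac{m+3}{4}\rfloor}\left(\tfrac{w-1}{w}\right)^{\lfloor\frac{m+1}{4}\rfloor},\\ P_m^2(K_{v,w})&=\theta^{\lfloor\frac{m}{2}\rfloor}\left(\tfrac{v-1}{v}\right)^{\lfloor\frac{m}{4}\rfloor}\left(\tfrac{w-1}{w}\right)^{\lfloor\frac{m+2}{4}\rfloor},\\ P_m^3(K_{v,w})&=\left(\tfrac{v-1}{v}\right)^{\lfloor\frac{m+1}{4}\rfloor}\left(\tfrac{w-1}{w}\right)^{\lfloor\frac{m+3}{4}\rfloor},\\ P_m^4(K_{v,w})&=\theta^{\lfloor\frac{m}{2}\rfloor}\left(\tfrac{v-1}{v}\right)^{\lfloor\frac{m+2}{4}\rfloor}\left(\tfrac{w-1}{w}\right)^{\lfloor\frac{m}{4}\rfloor}. \end{align*}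
   Context: Tipsy cop and drunken robber game on a finite connected graph $G$: a cop and a robber are placed at distinct vertices. Moves are numbered $1,2,3,\dots$; the robber makes the odd-numbered moves and the cop the even-numbered moves, and on each move the mover must move to a vertex adjacent to its current vertex (staying put is not allowed). The robber always moves to a neighbor chosen uniformly at random. The cop, independently at each of her moves, with probability $\theta$ moves to a neighbor chosen uniformly at random, and with probability $1-\theta$ makes a directed move to a neighbor lying on a shortest path to the robber's current vertex (in particular onto the robber's vertex if it is adjacent). All random choices are independent. The robber is captured (and the game ends) as soon as both occupy the same vertex. Starting positions on $K_{v,w}$: Position 1: the cop is at a vertex of $V$ and the robber at a vertex of $W$; Position 2: cop and robber are at two distinct vertices of $V$; Position 3: the robber is at a vertex of $V$ and the cop at a vertex of $W$; Position 4: cop and robber are at two distinct vertices of $W$. *)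

theory Defs
  imports Complex_Main
begin

text \<open>A graph is given by a finite vertex set Vs and a symmetric irreflexive
adjacency relation E (only relating vertices of Vs).\<close>

definition nbrs :: "'a set \<Rightarrow> ('a \<Rightarrow> 'a \<Rightarrow> bool) \<Rightarrow> 'a \<Rightarrow> 'a set" where
  "nbrs Vs E x = {y \<in> Vs. E x y}"

fun reach :: "('a \<Rightarrow> 'a \<Rightarrow> bool) \<Rightarrow> nat \<Rightarrow> 'a \<Rightarrow> 'a \<Rightarrow> bool" where
  "reach E 0 x y = (x = y)"
| "reach E (Suc n) x y = (\<exists>z. E x z \<and> reach E n z y)"

definition gdist :: "('a \<Rightarrow> 'a \<Rightarrow> bool) \<Rightarrow> 'a \<Rightarrow> 'a \<Rightarrow> nat" where
  "gdist E x y = (LEAST n. reach E n x y)"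

definition avg :: "'a set \<Rightarrow> ('a \<Rightarrow> real) \<Rightarrow> real" where
  "avg A f = (\<Sum>y\<in>A. f y) / real (card A)"

definition valid_dir :: "'a set \<Rightarrow> ('a \<Rightarrow> 'a \<Rightarrow> bool) \<Rightarrow> ('a \<Rightarrow> 'a \<Rightarrow> 'a) \<Rightarrow> bool" where
  "valid_dir Vs E d \<longleftrightarrow> (\<forall>c\<in>Vs. \<forall>r\<in>Vs. c \<noteq> r \<longrightarrow>
      d c r \<in> nbrs Vs E c \<and> gdist E (d c r) r + 1 = gdist E c r)"

text \<open>freeP Vs E \<theta> d m rt c r : probability that the robber is still free after m
further moves, from cop position c and robber position r, where rt says whether the
next move is the robber's.\<close>
fun freeP :: "'a set \<Rightarrow> ('a \<Rightarrow> 'a \<Rightarrow> bool) \<Rightarrow> real \<Rightarrow> ('a \<Rightarrow> 'a \<Rightarrow> 'a)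
               \<Rightarrow> nat \<Rightarrow> bool \<Rightarrow> 'a \<Rightarrow> 'a \<Rightarrow> real" where
  "freeP Vs E \<theta> d 0 rt c r = (if c = r then 0 else 1)"
| "freeP Vs E \<theta> d (Suc m) rt c r =
     (if c = r then 0
      else if rt then avg (nbrs Vs E r) (\<lambda>r'. freeP Vs E \<theta> d m False c r')
      else \<theta> * avg (nbrs Vs E c) (\<lambda>c'. freeP Vs E \<theta> d m True c' r)
           + (1 - \<theta>) * freeP Vs E \<theta> d m True (d c r) r)"

definition P_free :: "'a set \<Rightarrow> ('a \<Rightarrow> 'a \<Rightarrow> bool) \<Rightarrow> real \<Rightarrow> ('a \<Rightarrow> 'a \<Rightarrow> 'a)
               \<Rightarrow> nat \<Rightarrow> 'a \<Rightarrow> 'a \<Rightarrow> real" where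
  "P_free Vs E \<theta> d m c r = freeP Vs E \<theta> d m True c r"

definition KV :: "nat \<Rightarrow> (nat + nat) set" where "KV v = Inl ` {..<v}"
definition KW :: "nat \<Rightarrow> (nat + nat) set" where "KW w = Inr ` {..<w}"
definition Kverts :: "nat \<Rightarrow> nat \<Rightarrow> (nat + nat) set" where "Kverts v w = KV v \<union> KW w"
definition Kadj :: "nat \<Rightarrow> nat \<Rightarrow> (nat + nat) \<Rightarrow> (nat + nat) \<Rightarrow> bool" where
  "Kadj v w x y \<longleftrightarrow> (x \<in> KV v \<and> y \<in> KW w) \<or> (x \<in> KW w \<and> y \<in> KV v)"

end

theory Submission
  imports Defs
begin

text \<open>In K_{v,w} every move crosses sides. From cop and robber on opposite sides the robber is
caught on his move with probability 1/|side|; otherwise both stand on one side and the cop must move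
across, so after two moves the players are again on opposite sides, now with V and W exchanged.
From cop and robber on the same side the robber escapes across, and the now adjacent cop catches
him unless she moves at random (probability \<theta>) and misses (probability (|side| - 1)/|side|);
again two moves lead to the mirror-image position. Hence both recursions advance by two moves and
swap the roles of V and W, which is why the formulas are proved for all complete bipartite graphs
simultaneously.\<close>

definition miss_prob :: "'a set \<Rightarrow> real" where
  "miss_prob A = (real (card A) - 1) / real (card A)"

lemma avg_const:
  assumes "finite A" "A \<noteq> {}" "\<And>x. x \<in> A \<Longrightarrow> f x = X"
  shows "avg A f = X"
  using assms by (simp add: avg_def)

lemma avg_const_except_zero:
  assumes "finite A" "c \<in> A" "f c = 0"
    and "\<And>x. x \<in> A \<Longrightarrow> x \<noteq> c \<Longrightarrow> f x = X"
  shows "avg A f = miss_prob A * X"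
proof -
  have "(\<Sum>y\<in>A. f y) = f c + (\<Sum>y\<in>A - {c}. f y)"
    using assms(1,2) by (simp add: sum.remove)
  also have "\<dots> = real (card (A - {c})) * X"
    using assms(3,4) by simp
  also have "\<dots> = (real (card A) - 1) * X"
  proof -
    have "card A \<ge> 1"
      using assms(1,2) by (auto simp: Suc_le_eq card_gt_0_iff)
    then show ?thesis
      using assms(1,2) by (simp add: of_nat_diff)
  qed
  finally show ?thesis
    unfolding avg_def miss_prob_def by simp
qed

lemma gdist_adjacent:
  assumes "E c r" "c \<noteq> r"
  shows "gdist E c r = 1"
  unfolding gdist_def
proof (rule Least_equality)
  show "reach E 1 c r"
    using assms(1) by simp
  show "1 \<le> n" if "reach E n c r" for n
    using that assms(2) by (cases n) auto
qed

lemma gdist_eq_0_imp_eq: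
  assumes "gdist E x y = 0" "reach E n x y"
  shows "x = y"
  using LeastI[of "\<lambda>n. reach E n x y", OF assms(2)] assms(1) by (simp add: gdist_def)

text \<open>Symmetry gives the walk d c r, c, r, without which gdist (d c r) r = 0 (a LEAST over a
possibly empty set) would say nothing.\<close>

lemma valid_dir_adjacent:
  assumes "valid_dir Vs E d" "symp E" "c \<in> Vs" "r \<in> nbrs Vs E c" "c \<noteq> r"
  shows "d c r = r"
proof -
  have r: "r \<in> Vs" "E c r"
    using assms(4) by (auto simp: nbrs_def)
  have "E c (d c r)" and dist: "gdist E (d c r) r + 1 = gdist E c r"
    using assms(1,3,5) r(1) by (auto simp: valid_dir_def nbrs_def)
  have "gdist E (d c r) r = 0"
    using dist gdist_adjacent[of E c r] r(2) assms(5) by simp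
  moreover have "reach E 2 (d c r) r"
    using \<open>E c (d c r)\<close> assms(2) r(2) by (auto simp: numeral_2_eq_2 dest: sympD)
  ultimately show ?thesis
    by (rule gdist_eq_0_imp_eq)
qed

lemma freeP_capture: "freeP Vs E \<theta> d m rt c c = 0"
  by (cases m) auto

locale complete_bipartite_game =
  fixes Vs :: "'a set" and E :: "'a \<Rightarrow> 'a \<Rightarrow> bool" and A B :: "'a set"
    and d :: "'a \<Rightarrow> 'a \<Rightarrow> 'a"
  assumes finite_A: "finite A" and finite_B: "finite B"
    and A_nonempty: "A \<noteq> {}" and B_nonempty: "B \<noteq> {}"
    and disjoint: "A \<inter> B = {}"
    and nbrs_A: "x \<in> A \<Longrightarrow> nbrs Vs E x = B"
    and nbrs_B: "x \<in> B \<Longrightarrow> nbrs Vs E x = A"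
    and sym: "symp E"
    and valid_dir: "valid_dir Vs E d"
begin

lemma swap: "complete_bipartite_game Vs E B A d"
  by unfold_locales (use finite_A finite_B A_nonempty B_nonempty disjoint nbrs_A nbrs_B sym
      valid_dir in auto)

lemma A_subset_Vs: "A \<subseteq> Vs"
  using B_nonempty nbrs_B by (auto simp: nbrs_def)

lemma across_neq: "c \<in> A \<Longrightarrow> r \<in> B \<Longrightarrow> c \<noteq> r"
  using disjoint by auto

lemma robber_step_across:
  assumes "c \<in> A" "r \<in> B"
    and "\<And>r'. r' \<in> A \<Longrightarrow> r' \<noteq> c \<Longrightarrow> freeP Vs E \<theta> d m False c r' = X"
  shows "freeP Vs E \<theta> d (Suc m) True c r = miss_prob A * X"
proof -
  have "freeP Vs E \<theta> d (Suc m) True c r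
      = avg A (\<lambda>r'. freeP Vs E \<theta> d m False c r')"
    using across_neq[OF assms(1,2)] nbrs_B[OF assms(2)] by simp
  also have "\<dots> = miss_prob A * X"
    using avg_const_except_zero[OF finite_A assms(1)] assms(3)
    by (simp add: freeP_capture)
  finally show ?thesis .
qed

lemma robber_step_same_side:
  assumes "r \<in> A" "c \<noteq> r"
    and "\<And>r'. r' \<in> B \<Longrightarrow> freeP Vs E \<theta> d m False c r' = X"
  shows "freeP Vs E \<theta> d (Suc m) True c r = X"
  using assms nbrs_A[OF assms(1)] avg_const[OF finite_B B_nonempty] by simp

lemma cop_step_same_side:
  assumes "c \<in> A" "r \<in> A" "c \<noteq> r"
    and "\<And>c'. c' \<in> B \<Longrightarrow> freeP Vs E \<theta> d m True c' r = X"
  shows "freeP Vs E \<theta> d (Suc m) False c r = X"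
proof -
  have "d c r \<in> B"
    using valid_dir assms(1-3) A_subset_Vs nbrs_A[OF assms(1)] by (auto simp: valid_dir_def)
  then have "freeP Vs E \<theta> d (Suc m) False c r
      = \<theta> * avg B (\<lambda>c'. freeP Vs E \<theta> d m True c' r) + (1 - \<theta>) * X"
    using assms nbrs_A[OF assms(1)] by simp
  also have "\<dots> = X"
    using avg_const[OF finite_B B_nonempty] assms(4) by (simp add: algebra_simps)
  finally show ?thesis .
qed

lemma cop_step_across:
  assumes "c \<in> A" "r \<in> B"
    and "\<And>c'. c' \<in> B \<Longrightarrow> c' \<noteq> r \<Longrightarrow> freeP Vs E \<theta> d m True c' r = X"
  shows "freeP Vs E \<theta> d (Suc m) False c r = \<theta> * miss_prob B * X"
proof -
  have "d c r = r"
    using valid_dir_adjacent[OF valid_dir sym] assms(1,2) A_subset_Vs nbrs_A[OF assms(1)]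
      across_neq by blast
  then have "freeP Vs E \<theta> d (Suc m) False c r
      = \<theta> * avg B (\<lambda>c'. freeP Vs E \<theta> d m True c' r)"
    using across_neq[OF assms(1,2)] nbrs_A[OF assms(1)] by (simp add: freeP_capture)
  also have "\<dots> = \<theta> * miss_prob B * X"
    using avg_const_except_zero[OF finite_B assms(2)] assms(3)
    by (simp add: freeP_capture)
  finally show ?thesis .
qed

lemma two_steps_across:
  assumes "c \<in> A" "r \<in> B"
    and "\<And>c' r'. c' \<in> B \<Longrightarrow> r' \<in> A \<Longrightarrow> freeP Vs E \<theta> d m True c' r' = X"
  shows "freeP Vs E \<theta> d (Suc (Suc m)) True c r = miss_prob A * X"
  using assms by (intro robber_step_across cop_step_same_side) auto

lemma two_steps_same_side:
  assumes "c \<in> A" "r \<in> A" "c \<noteq> r"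
    and "\<And>c' r'. c' \<in> B \<Longrightarrow> r' \<in> B \<Longrightarrow> c' \<noteq> r'
      \<Longrightarrow> freeP Vs E \<theta> d m True c' r' = X"
  shows "freeP Vs E \<theta> d (Suc (Suc m)) True c r = \<theta> * miss_prob B * X"
  using assms by (intro robber_step_same_side cop_step_across) auto

end

lemma free_prob_across:
  assumes "complete_bipartite_game Vs E A B d" "c \<in> A" "r \<in> B"
  shows "freeP Vs E \<theta> d m True c r
      = miss_prob A ^ ((m + 3) div 4) * miss_prob B ^ ((m + 1) div 4)"
  using assms
proof (induction m arbitrary: A B c r rule: induct_nat_012)
  case 0
  then show ?case
    using complete_bipartite_game.across_neq by fastforce
next
  case 1
  then show ?case
    using complete_bipartite_game.robber_step_across[OF 1(1), where m = 0 and X = 1] by simp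
next
  case (ge2 m)
  interpret complete_bipartite_game Vs E A B d
    by (fact ge2.prems(1))
  have exponents: "(Suc (Suc m) + 3) div 4 = Suc ((m + 1) div 4)"
    "(Suc (Suc m) + 1) div 4 = (m + 3) div 4"
    by presburger+
  have "freeP Vs E \<theta> d (Suc (Suc m)) True c r
      = miss_prob A * (miss_prob B ^ ((m + 3) div 4) * miss_prob A ^ ((m + 1) div 4))"
    using two_steps_across ge2.IH(1)[OF swap] ge2.prems(2,3) by blast
  then show ?case
    unfolding exponents by (simp add: ac_simps del: freeP.simps)
qed

lemma free_prob_same_side:
  assumes "complete_bipartite_game Vs E A B d" "c \<in> A" "r \<in> A" "c \<noteq> r"
  shows "freeP Vs E \<theta> d m True c r
      = \<theta> ^ (m div 2) * miss_prob A ^ (m div 4) * miss_prob B ^ ((m + 2) div 4)"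
  using assms
proof (induction m arbitrary: A B c r rule: induct_nat_012)
  case 0
  then show ?case by simp
next
  case 1
  then show ?case
    using complete_bipartite_game.robber_step_same_side[OF 1(1), where m = 0 and X = 1]
      complete_bipartite_game.across_neq[OF 1(1)] by auto
next
  case (ge2 m)
  interpret complete_bipartite_game Vs E A B d
    by (fact ge2.prems(1))
  have exponents: "Suc (Suc m) div 2 = Suc (m div 2)" "Suc (Suc m) div 4 = (m + 2) div 4"
    "(Suc (Suc m) + 2) div 4 = Suc (m div 4)"
    by presburger+
  have "freeP Vs E \<theta> d (Suc (Suc m)) True c r
      = \<theta> * miss_prob B
        * (\<theta> ^ (m div 2) * miss_prob B ^ (m div 4) * miss_prob A ^ ((m + 2) div 4))"
    using two_steps_same_side ge2.IH(1)[OF swap] ge2.prems(2-4) by blast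
  then show ?case
    unfolding exponents by (simp add: ac_simps del: freeP.simps)
qed

lemma complete_bipartite_game_Kvw:
  assumes "v \<ge> 1" "w \<ge> 1" "valid_dir (Kverts v w) (Kadj v w) d"
  shows "complete_bipartite_game (Kverts v w) (Kadj v w) (KV v) (KW w) d"
  using assms
  by unfold_locales
    (auto simp: KV_def KW_def Kverts_def Kadj_def nbrs_def symp_def lessThan_empty_iff)

lemma miss_prob_KV: "miss_prob (KV v) = (real v - 1) / real v"
  by (simp add: miss_prob_def KV_def card_image)

lemma miss_prob_KW: "miss_prob (KW w) = (real w - 1) / real w"
  by (simp add: miss_prob_def KW_def card_image)

theorem mainTheorem4:
  fixes v w :: nat and \<theta> :: real and d :: "nat + nat \<Rightarrow> nat + nat \<Rightarrow> nat + nat"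
  assumes "v \<ge> 1" and "w \<ge> 1" and "0 \<le> \<theta>" and "\<theta> \<le> 1"
    and "valid_dir (Kverts v w) (Kadj v w) d"
  shows
   "(\<forall>m c r. c \<in> KV v \<and> r \<in> KW w \<longrightarrow>
       P_free (Kverts v w) (Kadj v w) \<theta> d m c r =
         ((real v - 1) / real v) ^ ((m + 3) div 4) * ((real w - 1) / real w) ^ ((m + 1) div 4))
  \<and> (\<forall>m c r. c \<in> KV v \<and> r \<in> KV v \<and> c \<noteq> r \<longrightarrow>
       P_free (Kverts v w) (Kadj v w) \<theta> d m c r =
         \<theta> ^ (m div 2) * ((real v - 1) / real v) ^ (m div 4) * ((real w - 1) / real w) ^ ((m + 2) div 4))
  \<and> (\<forall>m c r. r \<in> KV v \<and> c \<in> KW w \<longrightarrow>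
       P_free (Kverts v w) (Kadj v w) \<theta> d m c r =
         ((real v - 1) / real v) ^ ((m + 1) div 4) * ((real w - 1) / real w) ^ ((m + 3) div 4))
  \<and> (\<forall>m c r. c \<in> KW w \<and> r \<in> KW w \<and> c \<noteq> r \<longrightarrow>
       P_free (Kverts v w) (Kadj v w) \<theta> d m c r =
         \<theta> ^ (m div 2) * ((real v - 1) / real v) ^ ((m + 2) div 4) * ((real w - 1) / real w) ^ (m div 4))"
proof -
  interpret VW: complete_bipartite_game "Kverts v w" "Kadj v w" "KV v" "KW w" d
    using complete_bipartite_game_Kvw[OF assms(1,2,5)] .
  interpret WV: complete_bipartite_game "Kverts v w" "Kadj v w" "KW w" "KV v" d
    by (fact VW.swap)
  show ?thesis
    unfolding P_free_def miss_prob_KV[of v, symmetric] miss_prob_KW[of w, symmetric]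
    using free_prob_across[OF VW.complete_bipartite_game_axioms]
      free_prob_across[OF WV.complete_bipartite_game_axioms]
      free_prob_same_side[OF VW.complete_bipartite_game_axioms]
      free_prob_same_side[OF WV.complete_bipartite_game_axioms]
    by (simp add: mult.commute)
qed

end
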